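(* Every locally Menger Hausdorff $P$-space can be densely embedded in a Menger Hausdorff $P$-space.
   Context: A space $X$ is Menger if for each sequence $(\mathcal{U}_n)$ of open covers of $X$ there is a sequence $(\mathcal{V}_n)$ with each $\mathcal{V}_n$ a finite subset of $\mathcal{U}_n$ and $\bigcup_{n}\bigcup\mathcal{V}_n=X$. A space $X$ is locally Menger if for each $x\in X$ there exist an open set $U$ and a Menger subspace $Y$ of $X$ with $x\in U\subseteq Y$. A $P$-space is a space in which every countable intersection of open sets is open. *)

theory Defs
  imports "HOL-Analysis.Analysis"
begin

definition open_cover_of :: "'a topology \<Rightarrow> 'a set set \<Rightarrow> bool" where
  "open_cover_of X \<U> \<longleftrightarrow> (\<forall>U\<in>\<U>. openin X U) \<and> topspace X \<subseteq> \<Union>\<U>"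

definition Menger_space :: "'a topology \<Rightarrow> bool" where
  "Menger_space X \<longleftrightarrow>
     (\<forall>\<U> :: nat \<Rightarrow> 'a set set. (\<forall>n. open_cover_of X (\<U> n)) \<longrightarrow>
        (\<exists>\<V> :: nat \<Rightarrow> 'a set set. (\<forall>n. finite (\<V> n) \<and> \<V> n \<subseteq> \<U> n) \<and>
            (\<Union>n. \<Union>(\<V> n)) = topspace X))"

definition locally_Menger_space :: "'a topology \<Rightarrow> bool" where
  "locally_Menger_space X \<longleftrightarrow>
     (\<forall>x\<in>topspace X. \<exists>U Y. openin X U \<and> Y \<subseteq> topspace X \<and>
        Menger_space (subtopology X Y) \<and> x \<in> U \<and> U \<subseteq> Y)"

definition P_space :: "'a topology \<Rightarrow> bool" where
  "P_space X \<longleftrightarrow>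
     (\<forall>\<F>. countable \<F> \<and> \<F> \<noteq> {} \<and> (\<forall>U\<in>\<F>. openin X U) \<longrightarrow> openin X (\<Inter>\<F>))"

end

theory Submission
  imports Defs
begin

(*
  Adjoin to X one new point whose neighbourhoods are the complements of the closed
  Lindelof subsets of X.  Since X is a P-space, countable unions of Lindelof sets are
  Lindelof and countable intersections of open sets are open, so the extension is again
  a P-space; it is Lindelof because a neighbourhood of the new point misses only a
  Lindelof set.  A Lindelof P-space is Menger: if (u n k)_k are countable subcovers of the
  given covers, then every set  INT n. UN k<=f n. u n k  is open, countably many of them,
  indexed by f_0, f_1, ..., cover the space, and the diagonal sets u n ` {..f_n n} are the
  required finite selections.  In a Hausdorff P-space Lindelof subsets are closed, so
  local Mengerness provides closed Lindelof neighbourhoods, which separate points of X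
  from the new point.  The closure of X in the extension is the required space.
*)

lemma Lindelof_space_subtopology_indexed_subcover:
  assumes "Lindelof_space (subtopology X K)" "\<And>i. i \<in> I \<Longrightarrow> openin X (A i)"
    and "K \<subseteq> (\<Union>i\<in>I. A i)"
  shows "\<exists>J\<subseteq>I. countable J \<and> K \<subseteq> (\<Union>i\<in>J. A i)"
proof -
  have "K \<subseteq> topspace X"
    using assms(2,3) openin_subset by blast
  then have "\<exists>\<V>. countable \<V> \<and> \<V> \<subseteq> A ` I \<and> K \<subseteq> \<Union>\<V>"
    using assms by (simp add: Lindelof_space_subtopology_subset)
  then show ?thesis
    unfolding ex_countable_subset_image by blast
qed

lemma Lindelof_space_sequence_subcover:
  assumes "Lindelof_space X" "open_cover_of X \<U>" "topspace X \<noteq> {}"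
  shows "\<exists>u :: nat \<Rightarrow> 'a set. range u \<subseteq> \<U> \<and> topspace X \<subseteq> (\<Union>k. u k)"
proof -
  obtain \<V> where \<V>: "countable \<V>" "\<V> \<subseteq> \<U>" "topspace X \<subseteq> \<Union>\<V>"
    using assms(1,2) unfolding Lindelof_space_alt open_cover_of_def by meson
  then have "\<V> \<noteq> {}"
    using assms(3) by auto
  with \<V> show ?thesis
    by (intro exI[of _ "from_nat_into \<V>"]) auto
qed

lemma Lindelof_space_closedin_subset:
  assumes "Lindelof_space (subtopology X K)" "closedin X C" "C \<subseteq> K"
  shows "Lindelof_space (subtopology X C)"
  using Lindelof_space_closedin_subtopology[OF assms(1) closedin_subset_topspace[OF assms(2,3)]]
  by (simp add: subtopology_subtopology Int_absorb1 assms(3))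

lemma Lindelof_space_subtopology_Un:
  assumes "Lindelof_space (subtopology X A)" "Lindelof_space (subtopology X B)"
  shows "Lindelof_space (subtopology X (A \<union> B))"
  using Lindelof_space_Union[of "{A, B}" X] assms by auto

lemma Menger_imp_Lindelof_space:
  assumes "Menger_space X"
  shows "Lindelof_space X"
  unfolding Lindelof_space_alt
proof (intro allI impI)
  fix \<U> assume "(\<forall>U\<in>\<U>. openin X U) \<and> topspace X \<subseteq> \<Union>\<U>"
  then obtain \<V> :: "nat \<Rightarrow> 'a set set"
    where \<V>: "\<And>n. finite (\<V> n) \<and> \<V> n \<subseteq> \<U>" "(\<Union>n. \<Union>(\<V> n)) = topspace X"
    using assms unfolding Menger_space_def open_cover_of_def by meson
  show "\<exists>\<W>. countable \<W> \<and> \<W> \<subseteq> \<U> \<and> topspace X \<subseteq> \<Union>\<W>"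
  proof (intro exI conjI)
    show "countable (\<Union>n. \<V> n)"
      using \<V>(1) by (simp add: countable_finite)
    show "(\<Union>n. \<V> n) \<subseteq> \<U>"
      using \<V>(1) by blast
    show "topspace X \<subseteq> \<Union>(\<Union>n. \<V> n)"
      using \<V>(2) by blast
  qed
qed

lemma P_spaceD:
  assumes "P_space X" "countable \<F>" "\<F> \<noteq> {}" "\<And>U. U \<in> \<F> \<Longrightarrow> openin X U"
  shows "openin X (\<Inter>\<F>)"
  using assms unfolding P_space_def by blast

lemma P_space_subtopology:
  assumes "P_space X"
  shows "P_space (subtopology X S)"
  unfolding P_space_def
proof (intro allI impI)
  fix \<F> assume \<F>: "countable \<F> \<and> \<F> \<noteq> {} \<and> (\<forall>U\<in>\<F>. openin (subtopology X S) U)"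
  then obtain V where V: "\<And>U. U \<in> \<F> \<Longrightarrow> openin X (V U) \<and> U = V U \<inter> S"
    unfolding openin_subtopology by metis
  have "openin X (\<Inter>(V ` \<F>))"
    using \<F> V by (intro P_spaceD[OF assms]) auto
  moreover have "\<Inter>\<F> = \<Inter>(V ` \<F>) \<inter> S"
    using \<F> V by blast
  ultimately show "openin (subtopology X S) (\<Inter>\<F>)"
    unfolding openin_subtopology by blast
qed

lemma Lindelof_P_space_diagonal_cover:
  fixes u :: "nat \<Rightarrow> nat \<Rightarrow> 'a set"
  assumes "Lindelof_space X" "P_space X"
    and u_open: "\<And>n k. openin X (u n k)" and u_cover: "\<And>n. topspace X \<subseteq> (\<Union>k. u n k)"
  shows "\<exists>g. topspace X \<subseteq> (\<Union>n. \<Union>k\<le>g n. u n k)"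
proof (cases "topspace X = {}")
  case False
  define G where "G f = (\<Inter>n. \<Union>k\<le>f n. u n k)" for f :: "nat \<Rightarrow> nat"
  have "openin X (G f)" for f
    unfolding G_def using u_open by (intro P_spaceD[OF assms(2)] openin_Union) auto
  moreover have "topspace X \<subseteq> (\<Union>f. G f)"
  proof
    fix x assume "x \<in> topspace X"
    then have "\<forall>n. \<exists>k. x \<in> u n k"
      using u_cover by blast
    then obtain f where "\<And>n. x \<in> u n (f n)"
      by metis
    then show "x \<in> (\<Union>f. G f)"
      unfolding G_def by blast
  qed
  ultimately have "\<exists>J. countable J \<and> topspace X \<subseteq> (\<Union>f\<in>J. G f)"
    using Lindelof_space_subtopology_indexed_subcover[of X "topspace X" UNIV G] assms(1)
    by simp
  then obtain J where J: "countable J" "topspace X \<subseteq> (\<Union>f\<in>J. G f)"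
    by blast
  define g where "g n = from_nat_into J n n" for n
  have "topspace X \<subseteq> (\<Union>n. \<Union>k\<le>g n. u n k)"
  proof
    fix x assume "x \<in> topspace X"
    then obtain f where "f \<in> J" "x \<in> G f"
      using J by blast
    moreover obtain m where "from_nat_into J m = f"
      using from_nat_into_surj[OF J(1) \<open>f \<in> J\<close>] by metis
    ultimately show "x \<in> (\<Union>n. \<Union>k\<le>g n. u n k)"
      unfolding G_def g_def by blast
  qed
  then show ?thesis
    by blast
qed simp

lemma Lindelof_P_space_imp_Menger_space:
  assumes "Lindelof_space X" "P_space X"
  shows "Menger_space X"
  unfolding Menger_space_def
proof (intro allI impI)
  fix \<U> :: "nat \<Rightarrow> 'a set set" assume cov: "\<forall>n. open_cover_of X (\<U> n)"
  show "\<exists>\<V>. (\<forall>n. finite (\<V> n) \<and> \<V> n \<subseteq> \<U> n) \<and> (\<Union>n. \<Union>(\<V> n)) = topspace X"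
  proof (cases "topspace X = {}")
    case True
    then show ?thesis
      by (intro exI[of _ "\<lambda>n. {}"]) auto
  next
    case False
    have "\<exists>u :: nat \<Rightarrow> 'a set. range u \<subseteq> \<U> n \<and> topspace X \<subseteq> (\<Union>k. u k)" for n
      using Lindelof_space_sequence_subcover[OF assms(1) spec[OF cov] False] .
    then obtain u :: "nat \<Rightarrow> nat \<Rightarrow> 'a set"
      where u: "\<And>n. range (u n) \<subseteq> \<U> n" "\<And>n. topspace X \<subseteq> (\<Union>k. u n k)"
      by metis
    have u_open: "openin X (u n k)" for n k
      using u(1) cov unfolding open_cover_of_def by blast
    from Lindelof_P_space_diagonal_cover[OF assms u_open u(2)]
    obtain g where g: "topspace X \<subseteq> (\<Union>n. \<Union>k\<le>g n. u n k)" ..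
    show ?thesis
    proof (intro exI conjI allI)
      show "finite (u n ` {..g n})" "u n ` {..g n} \<subseteq> \<U> n" for n
        using u(1) by auto
      show "(\<Union>n. \<Union>(u n ` {..g n})) = topspace X"
      proof
        show "(\<Union>n. \<Union>(u n ` {..g n})) \<subseteq> topspace X"
          using u_open openin_subset by blast
      qed (rule g)
    qed
  qed
qed

lemma Lindelof_subtopology_imp_closedin:
  assumes "Hausdorff_space X" "P_space X" "Lindelof_space (subtopology X S)" "S \<subseteq> topspace X"
  shows "closedin X S"
proof (cases "S = {}")
  case False
  have "\<exists>T. openin X T \<and> y \<in> T \<and> T \<subseteq> topspace X - S" if y: "y \<in> topspace X - S" for y
  proof -
    have "\<exists>U V. openin X U \<and> openin X V \<and> s \<in> U \<and> y \<in> V \<and> disjnt U V" if "s \<in> S" for s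
      using assms(1,4) y that unfolding Hausdorff_space_def by blast
    then obtain U V where UV: "\<And>s. s \<in> S \<Longrightarrow>
        openin X (U s) \<and> openin X (V s) \<and> s \<in> U s \<and> y \<in> V s \<and> disjnt (U s) (V s)"
      by metis
    obtain J where J: "J \<subseteq> S" "countable J" "S \<subseteq> (\<Union>s\<in>J. U s)"
      using Lindelof_space_subtopology_indexed_subcover[OF assms(3), of S U] UV by blast
    then have "J \<noteq> {}"
      using False by auto
    then have "openin X (\<Inter>(V ` J))"
      using J UV by (intro P_spaceD[OF assms(2)]) auto
    moreover have "\<Inter>(V ` J) \<inter> S = {}"
      using J UV unfolding disjnt_def by blast
    ultimately show ?thesis
      using J UV openin_subset by (intro exI[of _ "\<Inter>(V ` J)"]) blast
  qed
  then show ?thesis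
    using assms(4) unfolding closedin_def by (subst openin_subopen) blast
qed simp

lemma locally_Menger_P_space_closed_Lindelof_nbhd:
  assumes "locally_Menger_space X" "Hausdorff_space X" "P_space X" "x \<in> topspace X"
  shows "\<exists>U K. openin X U \<and> closedin X K \<and> x \<in> U \<and> U \<subseteq> K \<and> Lindelof_space (subtopology X K)"
proof -
  obtain U K where "openin X U" "K \<subseteq> topspace X" "Menger_space (subtopology X K)" "x \<in> U" "U \<subseteq> K"
    using assms(1,4) unfolding locally_Menger_space_def by blast
  moreover from this have "Lindelof_space (subtopology X K)"
    by (simp add: Menger_imp_Lindelof_space)
  ultimately show ?thesis
    using Lindelof_subtopology_imp_closedin[OF assms(2,3)] by blast
qed

(* The extension has to live on 'a set set: x is coded as {{x}}, the new point is {}. *)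
definition pt :: "'a \<Rightarrow> 'a set set" where
  "pt x = {{x}}"

definition Lindelof_ext_openin :: "'a topology \<Rightarrow> 'a set set set \<Rightarrow> bool" where
  "Lindelof_ext_openin X W \<longleftrightarrow>
     W \<subseteq> insert {} (pt ` topspace X) \<and> openin X {x \<in> topspace X. pt x \<in> W} \<and>
     ({} \<in> W \<longrightarrow> Lindelof_space (subtopology X {x \<in> topspace X. pt x \<notin> W}))"

definition Lindelof_extension :: "'a topology \<Rightarrow> 'a set set topology" where
  "Lindelof_extension X = topology (Lindelof_ext_openin X)"

lemma pt_eq_iff [simp]: "pt x = pt y \<longleftrightarrow> x = y"
  by (auto simp: pt_def)

lemma pt_neq_empty [simp]: "pt x \<noteq> {}" "{} \<noteq> pt x"
  by (auto simp: pt_def)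

lemma istopology_Lindelof_ext_openin: "istopology (Lindelof_ext_openin X)"
  unfolding istopology_def
proof (intro conjI allI impI)
  fix S T assume S: "Lindelof_ext_openin X S" and T: "Lindelof_ext_openin X T"
  have "{x \<in> topspace X. pt x \<in> S \<inter> T} = {x \<in> topspace X. pt x \<in> S} \<inter> {x \<in> topspace X. pt x \<in> T}"
    by blast
  moreover have "{x \<in> topspace X. pt x \<notin> S \<inter> T} = {x \<in> topspace X. pt x \<notin> S} \<union> {x \<in> topspace X. pt x \<notin> T}"
    by blast
  ultimately show "Lindelof_ext_openin X (S \<inter> T)"
    using S T unfolding Lindelof_ext_openin_def
    by (auto intro: Lindelof_space_subtopology_Un)
next
  fix \<K> assume \<K>: "\<forall>K\<in>\<K>. Lindelof_ext_openin X K"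
  have "{x \<in> topspace X. pt x \<in> \<Union>\<K>} = (\<Union>K\<in>\<K>. {x \<in> topspace X. pt x \<in> K})"
    by blast
  then have open_pre: "openin X {x \<in> topspace X. pt x \<in> \<Union>\<K>}"
    using \<K> unfolding Lindelof_ext_openin_def by auto
  have "Lindelof_space (subtopology X {x \<in> topspace X. pt x \<notin> \<Union>\<K>})" if "{} \<in> \<Union>\<K>"
  proof -
    from that obtain K where K: "K \<in> \<K>" "{} \<in> K"
      by blast
    show ?thesis
    proof (rule Lindelof_space_closedin_subset)
      show "Lindelof_space (subtopology X {x \<in> topspace X. pt x \<notin> K})"
        using \<K> K unfolding Lindelof_ext_openin_def by blast
      have "{x \<in> topspace X. pt x \<notin> \<Union>\<K>} = topspace X - {x \<in> topspace X. pt x \<in> \<Union>\<K>}"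
        by blast
      then show "closedin X {x \<in> topspace X. pt x \<notin> \<Union>\<K>}"
        using open_pre by (simp add: closedin_diff)
      show "{x \<in> topspace X. pt x \<notin> \<Union>\<K>} \<subseteq> {x \<in> topspace X. pt x \<notin> K}"
        using K by blast
    qed
  qed
  then show "Lindelof_ext_openin X (\<Union>\<K>)"
    using \<K> open_pre unfolding Lindelof_ext_openin_def by blast
qed

lemma openin_Lindelof_extension: "openin (Lindelof_extension X) = Lindelof_ext_openin X"
  unfolding Lindelof_extension_def by (rule topology_inverse'[OF istopology_Lindelof_ext_openin])

lemma topspace_Lindelof_extension:
  "topspace (Lindelof_extension X) = insert {} (pt ` topspace X)"
proof -
  have "{x \<in> topspace X. pt x \<in> insert {} (pt ` topspace X)} = topspace X"
    and no_pt: "{x \<in> topspace X. pt x \<notin> insert {} (pt ` topspace X)} = {}"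
    by auto
  then have "Lindelof_ext_openin X (insert {} (pt ` topspace X))"
    unfolding Lindelof_ext_openin_def no_pt by (simp add: Lindelof_space_topspace_empty)
  then show ?thesis
    unfolding topspace_def openin_Lindelof_extension Lindelof_ext_openin_def by blast
qed

lemma openin_Lindelof_extension_image:
  assumes "openin X U"
  shows "openin (Lindelof_extension X) (pt ` U)"
proof -
  have "{x \<in> topspace X. pt x \<in> pt ` U} = U"
    using openin_subset[OF assms] by auto
  then show ?thesis
    using openin_subset[OF assms] assms
    unfolding openin_Lindelof_extension Lindelof_ext_openin_def by auto
qed

lemma openin_Lindelof_extension_insert_empty:
  assumes "closedin X K" "Lindelof_space (subtopology X K)"
  shows "openin (Lindelof_extension X) (insert {} (pt ` (topspace X - K)))"
proof -
  have "{x \<in> topspace X. pt x \<in> insert {} (pt ` (topspace X - K))} = topspace X - K"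
    and "{x \<in> topspace X. pt x \<notin> insert {} (pt ` (topspace X - K))} = K"
    using closedin_subset[OF assms(1)] by auto
  then show ?thesis
    using assms unfolding openin_Lindelof_extension Lindelof_ext_openin_def
    by (auto simp: closedin_def)
qed

lemma embedding_map_pt_Lindelof_extension: "embedding_map X (Lindelof_extension X) pt"
proof (rule injective_open_imp_embedding_map)
  show "continuous_map X (Lindelof_extension X) pt"
    unfolding continuous_map_def topspace_Lindelof_extension openin_Lindelof_extension
      Lindelof_ext_openin_def by auto
  show "open_map X (Lindelof_extension X) pt"
    unfolding open_map_def using openin_Lindelof_extension_image by blast
qed (simp add: inj_on_def)

lemma P_space_Lindelof_extension:
  assumes "P_space X"
  shows "P_space (Lindelof_extension X)"
  unfolding P_space_def openin_Lindelof_extension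
proof (intro allI impI)
  fix \<F> assume \<F>: "countable \<F> \<and> \<F> \<noteq> {} \<and> (\<forall>W\<in>\<F>. Lindelof_ext_openin X W)"
  have "{x \<in> topspace X. pt x \<in> \<Inter>\<F>} = (\<Inter>W\<in>\<F>. {x \<in> topspace X. pt x \<in> W})"
    using \<F> by auto
  moreover have "openin X (\<Inter>W\<in>\<F>. {x \<in> topspace X. pt x \<in> W})"
    using \<F> unfolding Lindelof_ext_openin_def by (intro P_spaceD[OF assms]) auto
  ultimately have "openin X {x \<in> topspace X. pt x \<in> \<Inter>\<F>}"
    by simp
  moreover have "Lindelof_space (subtopology X {x \<in> topspace X. pt x \<notin> \<Inter>\<F>})"
    if "{} \<in> \<Inter>\<F>"
  proof -
    have "{x \<in> topspace X. pt x \<notin> \<Inter>\<F>} = (\<Union>W\<in>\<F>. {x \<in> topspace X. pt x \<notin> W})"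
      by blast
    moreover have "Lindelof_space (subtopology X (\<Union>W\<in>\<F>. {x \<in> topspace X. pt x \<notin> W}))"
      using \<F> that unfolding Lindelof_ext_openin_def by (intro Lindelof_space_Union) auto
    ultimately show ?thesis
      by simp
  qed
  moreover obtain W where "W \<in> \<F>"
    using \<F> by blast
  then have "\<Inter>\<F> \<subseteq> insert {} (pt ` topspace X)"
    using \<F> unfolding Lindelof_ext_openin_def by (meson Inter_lower order_trans)
  ultimately show "Lindelof_ext_openin X (\<Inter>\<F>)"
    unfolding Lindelof_ext_openin_def by blast
qed

lemma Lindelof_space_Lindelof_extension: "Lindelof_space (Lindelof_extension X)"
  unfolding Lindelof_space_alt topspace_Lindelof_extension openin_Lindelof_extension
proof (intro allI impI)
  fix \<U> assume \<U>: "(\<forall>W\<in>\<U>. Lindelof_ext_openin X W) \<and> insert {} (pt ` topspace X) \<subseteq> \<Union>\<U>"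
  then obtain W\<^sub>0 where W\<^sub>0: "W\<^sub>0 \<in> \<U>" "{} \<in> W\<^sub>0"
    by blast
  have "Lindelof_space (subtopology X {x \<in> topspace X. pt x \<notin> W\<^sub>0})"
    using \<U> W\<^sub>0 unfolding Lindelof_ext_openin_def by blast
  moreover have "\<And>W. W \<in> \<U> \<Longrightarrow> openin X {x \<in> topspace X. pt x \<in> W}"
    using \<U> unfolding Lindelof_ext_openin_def by blast
  moreover have "{x \<in> topspace X. pt x \<notin> W\<^sub>0} \<subseteq> (\<Union>W\<in>\<U>. {x \<in> topspace X. pt x \<in> W})"
    using \<U> by blast
  ultimately have "\<exists>\<J>\<subseteq>\<U>. countable \<J> \<and>
      {x \<in> topspace X. pt x \<notin> W\<^sub>0} \<subseteq> (\<Union>W\<in>\<J>. {x \<in> topspace X. pt x \<in> W})"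
    by (rule Lindelof_space_subtopology_indexed_subcover)
  then obtain \<J> where \<J>: "\<J> \<subseteq> \<U>" "countable \<J>"
      "{x \<in> topspace X. pt x \<notin> W\<^sub>0} \<subseteq> (\<Union>W\<in>\<J>. {x \<in> topspace X. pt x \<in> W})"
    by blast
  show "\<exists>\<V>. countable \<V> \<and> \<V> \<subseteq> \<U> \<and> insert {} (pt ` topspace X) \<subseteq> \<Union>\<V>"
  proof (intro exI conjI)
    show "insert {} (pt ` topspace X) \<subseteq> \<Union>(insert W\<^sub>0 \<J>)"
      using \<J>(3) W\<^sub>0(2) by blast
    show "countable (insert W\<^sub>0 \<J>)"
      using \<J>(2) by simp
    show "insert W\<^sub>0 \<J> \<subseteq> \<U>"
      using \<J>(1) W\<^sub>0(1) by simp
  qed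
qed

lemma Hausdorff_space_Lindelof_extension:
  assumes "Hausdorff_space X"
    and closed_Lindelof_nbhd: "\<And>x. x \<in> topspace X \<Longrightarrow>
      \<exists>U K. openin X U \<and> closedin X K \<and> x \<in> U \<and> U \<subseteq> K \<and> Lindelof_space (subtopology X K)"
  shows "Hausdorff_space (Lindelof_extension X)"
proof -
  let ?E = "Lindelof_extension X"
  have separate_infinity: "\<exists>U V. openin ?E U \<and> openin ?E V \<and> pt x \<in> U \<and> {} \<in> V \<and> disjnt U V"
    if x: "x \<in> topspace X" for x
  proof -
    obtain U K where UK: "openin X U" "closedin X K" "x \<in> U" "U \<subseteq> K"
        "Lindelof_space (subtopology X K)"
      using closed_Lindelof_nbhd[OF x] by blast
    have "disjnt (pt ` U) (insert {} (pt ` (topspace X - K)))"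
      using UK(4) by (auto simp: disjnt_def)
    then show ?thesis
      using openin_Lindelof_extension_image[OF UK(1)]
        openin_Lindelof_extension_insert_empty[OF UK(2,5)] UK(3) by blast
  qed
  have separate_points: "\<exists>U V. openin ?E U \<and> openin ?E V \<and> pt x \<in> U \<and> pt y \<in> V \<and> disjnt U V"
    if "x \<in> topspace X" "y \<in> topspace X" "x \<noteq> y" for x y
  proof -
    have "\<exists>U V. openin X U \<and> openin X V \<and> x \<in> U \<and> y \<in> V \<and> disjnt U V"
      using assms(1) that unfolding Hausdorff_space_def by blast
    then obtain U V where UV: "openin X U" "openin X V" "x \<in> U" "y \<in> V" "disjnt U V"
      by blast
    then have "disjnt (pt ` U) (pt ` V)"
      by (auto simp: disjnt_def)
    then show ?thesis
      using UV openin_Lindelof_extension_image by blast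
  qed
  show ?thesis
    unfolding Hausdorff_space_def topspace_Lindelof_extension
  proof (intro allI impI)
    fix a b assume "a \<in> insert {} (pt ` topspace X) \<and> b \<in> insert {} (pt ` topspace X) \<and> a \<noteq> b"
    then consider x where "x \<in> topspace X" "a = pt x" "b = {}"
      | y where "y \<in> topspace X" "a = {}" "b = pt y"
      | x y where "x \<in> topspace X" "y \<in> topspace X" "x \<noteq> y" "a = pt x" "b = pt y"
      by blast
    then show "\<exists>U V. openin ?E U \<and> openin ?E V \<and> a \<in> U \<and> b \<in> V \<and> disjnt U V"
    proof cases
      case 1
      then show ?thesis
        using separate_infinity by blast
    next
      case 2
      then show ?thesis
        using separate_infinity[of y] by (metis disjnt_sym)
    next
      case 3
      then show ?thesis
        using separate_points by blast
    qed
  qed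
qed

theorem theorem3p8:
  fixes X :: "'a topology"
  assumes "locally_Menger_space X" and "Hausdorff_space X" and "P_space X"
  shows "\<exists>(Y :: 'a set set topology) (e :: 'a \<Rightarrow> 'a set set).
           Menger_space Y \<and> Hausdorff_space Y \<and> P_space Y \<and>
           embedding_map X Y e \<and> Y closure_of (e ` topspace X) = topspace Y"
proof -
  let ?E = "Lindelof_extension X"
  define C where "C = ?E closure_of (pt ` topspace X)"
  have "pt ` topspace X \<subseteq> C"
    unfolding C_def by (intro closure_of_subset) (auto simp: topspace_Lindelof_extension)
  have "P_space (subtopology ?E C)"
    using P_space_subtopology[OF P_space_Lindelof_extension[OF assms(3)]] .
  moreover have "Menger_space (subtopology ?E C)"
  proof (rule Lindelof_P_space_imp_Menger_space[OF _ calculation])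
    show "Lindelof_space (subtopology ?E C)"
      unfolding C_def using Lindelof_space_Lindelof_extension closedin_closure_of
      by (rule Lindelof_space_closedin_subtopology)
  qed
  moreover have "Hausdorff_space (subtopology ?E C)"
    using Hausdorff_space_Lindelof_extension[OF assms(2)
        locally_Menger_P_space_closed_Lindelof_nbhd[OF assms]]
    by (rule Hausdorff_space_subtopology)
  moreover have "embedding_map X (subtopology ?E C) pt"
    using embedding_map_pt_Lindelof_extension \<open>pt ` topspace X \<subseteq> C\<close>
    by (simp add: embedding_map_in_subtopology)
  moreover have "subtopology ?E C closure_of (pt ` topspace X) = topspace (subtopology ?E C)"
    using \<open>pt ` topspace X \<subseteq> C\<close> closure_of_subset_topspace[of ?E]
    by (simp add: closure_of_subtopology_open C_def Int_absorb1)
  ultimately show ?thesis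
    by blast
qed

end
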